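(* In the UDoG template described in the context, for any $t\ge0$ and any $\rho_t>0$, \[ \bar r_t\alpha_t\langle g_t,x_{t+1}-x^\star\rangle\le\frac{\bar r_t^2\alpha_t^2\rho_t}{2}\|g_t-m_t\|^2-\frac1{2\rho_t}\|x_{t+1}-y_t\|^2+\left(\frac1{2\rho_t}-\frac{\sqrt{\Gamma^x_t}}{2}\right)\left(\|x_{t+1}-y_t\|^2+\|x_{t+1}-y_{t+1}\|^2\right)+\frac{\sqrt{\Gamma^y_t}}{2}\left(\|y_t-x^\star\|^2-\|y_{t+1}-x^\star\|^2\right). \]
   Context: Norms are Euclidean, $\Pi_{\mathcal K}$ is Euclidean projection. $\mathcal K\subseteq\mathbb{R}^n$ closed convex, $f:\mathcal K\to\mathbb R$ convex with minimizer $x^\star$, and $\mathcal O$ a stochastic gradient oracle (any random vectors $m_t,g_t$ below). UDoG template: given $x_0\in\mathcal K$, $r_\epsilon>0$, set $y_0=x_0$; for $t=0,1,\dots$: $\bar r_t=\max_{k\le t}\max\{\|y_k-x_0\|,\|x_k-x_0\|,r_\epsilon\}$, $\alpha_t=\sum_{k=0}^t\bar r_k/\bar r_t$, $w_t=\alpha_t\bar r_t$; $\bar z_t=\frac{w_ty_t+\sum_{k=0}^{t-1}w_kx_{k+1}}{\sum_{k=0}^tw_k}$, $m_t\sim\mathcal O(\bar z_t)$, $x_{t+1}=\Pi_{\mathcal K}(y_t-\alpha_t\eta_{x,t}m_t)$; $\bar x_t=\frac{\sum_{k=0}^tw_kx_{k+1}}{\sum_{k=0}^tw_k}$, $g_t\sim\mathcal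 O(\bar x_t)$, $y_{t+1}=\Pi_{\mathcal K}(y_t-\alpha_t\eta_{y,t}g_t)$. Step sizes $\eta_{x,t}=\bar r_t/\sqrt{\Gamma^x_t}$, $\eta_{y,t}=\bar r_t/\sqrt{\Gamma^y_t}$ with $0<\Gamma^x_0\le\Gamma^y_0\le\Gamma^x_1\le\Gamma^y_1\le\cdots$. *)

theory Defs
  imports "HOL-Analysis.Analysis"
begin

definition udog_rbar :: "'a::euclidean_space \<Rightarrow> real \<Rightarrow> (nat \<Rightarrow> 'a) \<Rightarrow> (nat \<Rightarrow> 'a) \<Rightarrow> nat \<Rightarrow> real" where
  "udog_rbar x0 r_eps x y t =
     Max ((\<lambda>k. max (max (norm (y k - x0)) (norm (x k - x0))) r_eps) ` {..t})"

definition udog_alpha :: "'a::euclidean_space \<Rightarrow> real \<Rightarrow> (nat \<Rightarrow> 'a) \<Rightarrow> (nat \<Rightarrow> 'a) \<Rightarrow> nat \<Rightarrow> real" where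
  "udog_alpha x0 r_eps x y t =
     (\<Sum>k\<le>t. udog_rbar x0 r_eps x y k) / udog_rbar x0 r_eps x y t"

definition udog_w :: "'a::euclidean_space \<Rightarrow> real \<Rightarrow> (nat \<Rightarrow> 'a) \<Rightarrow> (nat \<Rightarrow> 'a) \<Rightarrow> nat \<Rightarrow> real" where
  "udog_w x0 r_eps x y t = udog_alpha x0 r_eps x y t * udog_rbar x0 r_eps x y t"

definition udog_zbar :: "'a::euclidean_space \<Rightarrow> real \<Rightarrow> (nat \<Rightarrow> 'a) \<Rightarrow> (nat \<Rightarrow> 'a) \<Rightarrow> nat \<Rightarrow> 'a" where
  "udog_zbar x0 r_eps x y t =
     (1 / (\<Sum>k\<le>t. udog_w x0 r_eps x y k)) *\<^sub>R
       (udog_w x0 r_eps x y t *\<^sub>R y t + (\<Sum>k<t. udog_w x0 r_eps x y k *\<^sub>R x (Suc k)))"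

definition udog_xbar :: "'a::euclidean_space \<Rightarrow> real \<Rightarrow> (nat \<Rightarrow> 'a) \<Rightarrow> (nat \<Rightarrow> 'a) \<Rightarrow> nat \<Rightarrow> 'a" where
  "udog_xbar x0 r_eps x y t =
     (1 / (\<Sum>k\<le>t. udog_w x0 r_eps x y k)) *\<^sub>R
       (\<Sum>k\<le>t. udog_w x0 r_eps x y k *\<^sub>R x (Suc k))"

text \<open>A run of the UDoG template with oracle outputs m t (queried at zbar t)
  and g t (queried at xbar t), which are arbitrary vectors.\<close>
definition udog_run ::
  "'a::euclidean_space set \<Rightarrow> 'a \<Rightarrow> real \<Rightarrow> (nat \<Rightarrow> real) \<Rightarrow> (nat \<Rightarrow> real)
    \<Rightarrow> (nat \<Rightarrow> 'a) \<Rightarrow> (nat \<Rightarrow> 'a) \<Rightarrow> (nat \<Rightarrow> 'a) \<Rightarrow> (nat \<Rightarrow> 'a) \<Rightarrow> bool" where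
  "udog_run K x0 r_eps Gx Gy m g x y \<longleftrightarrow>
     x 0 = x0 \<and> y 0 = x0 \<and>
     (\<forall>t. x (Suc t) = closest_point K
            (y t - (udog_alpha x0 r_eps x y t * (udog_rbar x0 r_eps x y t / sqrt (Gx t))) *\<^sub>R m t)) \<and>
     (\<forall>t. y (Suc t) = closest_point K
            (y t - (udog_alpha x0 r_eps x y t * (udog_rbar x0 r_eps x y t / sqrt (Gy t))) *\<^sub>R g t))"

end

theory Submission imports Defs begin

text \<open>The projection
  inequality for \<open>y\<^sub>t\<^sub>+\<^sub>1\<close>, tested against \<open>x\<^sup>\<star>\<close>, and the one for \<open>x\<^sub>t\<^sub>+\<^sub>1\<close>, tested against \<open>y\<^sub>t\<^sub>+\<^sub>1\<close>,
  bound \<open>\<langle>g\<^sub>t, y\<^sub>t\<^sub>+\<^sub>1 - x\<^sup>\<star>\<rangle>\<close> and \<open>\<langle>m\<^sub>t, x\<^sub>t\<^sub>+\<^sub>1 - y\<^sub>t\<^sub>+\<^sub>1\<rangle>\<close>; the remaining term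
  \<open>\<langle>g\<^sub>t - m\<^sub>t, x\<^sub>t\<^sub>+\<^sub>1 - y\<^sub>t\<^sub>+\<^sub>1\<rangle>\<close> is handled by Young's inequality with weight \<open>\<rho>\<^sub>t\<close>. The inner
  products are rewritten as differences of squared distances, and the two copies of
  \<open>\<parallel>y\<^sub>t - y\<^sub>t\<^sub>+\<^sub>1\<parallel>\<^sup>2\<close> cancel up to a nonpositive multiple because \<open>\<Gamma>\<^sup>x\<^sub>t \<le> \<Gamma>\<^sup>y\<^sub>t\<close>.\<close>

lemma inner_diff_common_point:
  fixes a b c :: "'a::real_inner"
  shows "inner (a - b) (c - b) = ((norm (a - b))\<^sup>2 + (norm (c - b))\<^sup>2 - (norm (a - c))\<^sup>2) / 2"
  by (simp add: power2_norm_eq_inner inner_diff_left inner_diff_right inner_commute algebra_simps)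

lemma scaled_inner_le_weighted_squares:
  fixes u v :: "'a::real_inner"
  assumes "rho > 0"
  shows "a * inner u v \<le> a\<^sup>2 * rho / 2 * (norm u)\<^sup>2 + 1 / (2 * rho) * (norm v)\<^sup>2"
proof -
  have "0 \<le> (norm ((rho * a) *\<^sub>R u - v))\<^sup>2" by simp
  also have "\<dots> = (rho * a)\<^sup>2 * (norm u)\<^sup>2 - 2 * rho * (a * inner u v) + (norm v)\<^sup>2"
    unfolding power2_norm_eq_inner
    by (simp add: inner_diff_left inner_diff_right inner_commute power2_eq_square algebra_simps)
  finally have "2 * rho * (a * inner u v) \<le> rho\<^sup>2 * (a\<^sup>2 * (norm u)\<^sup>2) + (norm v)\<^sup>2"
    by (simp add: power_mult_distrib)
  then show ?thesis
    using assms by (simp add: field_simps power2_eq_square)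
qed

lemma projected_step_inner_bound:
  fixes y p z d :: "'a::real_inner"
  assumes "s > 0" and "inner (y - (a / s) *\<^sub>R d - p) (z - p) \<le> 0"
  shows "s * inner (y - p) (z - p) \<le> a * inner d (z - p)"
proof -
  have "inner (y - p) (z - p) - a / s * inner d (z - p) \<le> 0"
    using assms(2) by (simp add: inner_diff_left)
  then show ?thesis
    using assms(1) by (simp add: field_simps)
qed

lemma optimistic_step_bound:
  fixes y x' y' xs m g :: "'a::real_inner"
  assumes sx: "sx > 0" and sxy: "sx \<le> sy" and rho: "rho > 0"
    and px: "inner (y - (a / sx) *\<^sub>R m - x') (y' - x') \<le> 0"
    and py: "inner (y - (a / sy) *\<^sub>R g - y') (xs - y') \<le> 0"
  shows "a * inner g (x' - xs) \<le> a\<^sup>2 * rho / 2 * (norm (g - m))\<^sup>2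
      - 1 / (2 * rho) * (norm (x' - y))\<^sup>2
      + (1 / (2 * rho) - sx / 2) * ((norm (x' - y))\<^sup>2 + (norm (x' - y'))\<^sup>2)
      + sy / 2 * ((norm (y - xs))\<^sup>2 - (norm (y' - xs))\<^sup>2)"
proof -
  have split: "a * inner g (x' - xs)
      = a * inner (g - m) (x' - y') - a * inner g (xs - y') - a * inner m (y' - x')"
    by (simp add: algebra_simps)
  have g_step: "sy * inner (y - y') (xs - y') \<le> a * inner g (xs - y')"
    using projected_step_inner_bound[OF _ py] sx sxy by linarith
  have m_step: "sx * inner (y - x') (y' - x') \<le> a * inner m (y' - x')"
    using projected_step_inner_bound[OF sx px] .
  have young: "a * inner (g - m) (x' - y')
      \<le> a\<^sup>2 * rho / 2 * (norm (g - m))\<^sup>2 + 1 / (2 * rho) * (norm (x' - y'))\<^sup>2"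
    using scaled_inner_le_weighted_squares[OF rho] .
  have "sx * (norm (y - y'))\<^sup>2 \<le> sy * (norm (y - y'))\<^sup>2"
    using sxy by (simp add: mult_right_mono)
  with g_step m_step young show ?thesis
    unfolding split inner_diff_common_point[of y y' xs] inner_diff_common_point[of y x' y']
    by (simp add: norm_minus_commute algebra_simps del: inner_diff_left inner_diff_right)
qed

theorem lemma16:
  fixes K :: "'a::euclidean_space set" and f :: "'a \<Rightarrow> real"
    and x0 xstar :: 'a and r_eps :: real and Gx Gy :: "nat \<Rightarrow> real"
    and m g x y :: "nat \<Rightarrow> 'a" and t :: nat and rho :: real
  assumes K: "closed K" "convex K" and x0K: "x0 \<in> K"
    and f: "convex_on K f" and xstar: "xstar \<in> K" "\<forall>z\<in>K. f xstar \<le> f z"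
    and reps: "r_eps > 0"
    and G0: "0 < Gx 0" and Gmono: "\<forall>k. Gx k \<le> Gy k \<and> Gy k \<le> Gx (Suc k)"
    and run: "udog_run K x0 r_eps Gx Gy m g x y"
    and rho: "rho > 0"
  shows "udog_rbar x0 r_eps x y t * udog_alpha x0 r_eps x y t * inner (g t) (x (Suc t) - xstar)
    \<le> (udog_rbar x0 r_eps x y t)\<^sup>2 * (udog_alpha x0 r_eps x y t)\<^sup>2 * rho / 2 * (norm (g t - m t))\<^sup>2
      - 1 / (2 * rho) * (norm (x (Suc t) - y t))\<^sup>2
      + (1 / (2 * rho) - sqrt (Gx t) / 2) * ((norm (x (Suc t) - y t))\<^sup>2 + (norm (x (Suc t) - y (Suc t)))\<^sup>2)
      + sqrt (Gy t) / 2 * ((norm (y t - xstar))\<^sup>2 - (norm (y (Suc t) - xstar))\<^sup>2)"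
proof -
  define a where "a = udog_rbar x0 r_eps x y t * udog_alpha x0 r_eps x y t"
  have "Gx k \<le> Gx (Suc k)" for k
    using Gmono order_trans by blast
  then have "Gx 0 \<le> Gx t"
    by (rule lift_Suc_mono_le) simp
  then have sx: "sqrt (Gx t) > 0"
    using G0 by simp
  have sxy: "sqrt (Gx t) \<le> sqrt (Gy t)"
    using Gmono by simp
  have x_step: "x (Suc t) = closest_point K (y t - (a / sqrt (Gx t)) *\<^sub>R m t)"
    and y_step: "y (Suc t) = closest_point K (y t - (a / sqrt (Gy t)) *\<^sub>R g t)"
    using run unfolding udog_run_def a_def by (simp_all add: mult.commute)
  have "y (Suc t) \<in> K"
    using K x0K unfolding y_step by (auto intro: closest_point_in_set)
  then have px: "inner (y t - (a / sqrt (Gx t)) *\<^sub>R m t - x (Suc t)) (y (Suc t) - x (Suc t)) \<le> 0"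
    unfolding x_step using K by (intro closest_point_dot)
  have py: "inner (y t - (a / sqrt (Gy t)) *\<^sub>R g t - y (Suc t)) (xstar - y (Suc t)) \<le> 0"
    unfolding y_step using K xstar(1) by (intro closest_point_dot)
  from optimistic_step_bound[OF sx sxy rho px py] show ?thesis
    unfolding a_def by (simp add: power_mult_distrib)
qed

end
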